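(* Let $\boldsymbol Z$ be a square-integrable random vector in $\mathbb R^d$ and $Y$ a random element. Let $\{S_h\}_{h=1}^H$ be a partition of the range of $Y$ such that, for some $\gamma>0$ and $\tau>1+\gamma$, $0<\mathbb P(Y\in S_h)\le(1+\gamma)H^{-1}$ for all $h$, and for every unit $\boldsymbol\beta\in\mathbb R^d$, $$\frac1H\sum_{h=1}^H\mathrm{var}\big(\boldsymbol\beta^\top\mathbb E(\boldsymbol Z\mid Y)\mid Y\in S_h\big)\le\frac1\tau\mathrm{var}\big(\boldsymbol\beta^\top\mathbb E(\boldsymbol Z\mid Y)\big).$$ Let $W=\sum_{h=1}^H h\,\mathbf 1_{Y\in S_h}$. Then for every unit $\boldsymbol\beta\in\mathbb R^d$, $$\Big(1-\frac{1+\gamma}{\tau}\Big)\mathrm{var}\big(\boldsymbol\beta^\top\mathbb E(\boldsymbol Z\mid Y)\big)\le\mathrm{var}\big(\boldsymbol\beta^\top\mathbb E(\boldsymbol Z\mid W)\big).$$ *)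

theory Defs
  imports "HOL-Probability.Probability"
begin

definition cond_exp_vec :: "'a measure \<Rightarrow> 'a measure \<Rightarrow> ('a \<Rightarrow> real ^ 'd) \<Rightarrow> 'a \<Rightarrow> real ^ 'd" where
  "cond_exp_vec M F Z = (\<lambda>x. \<chi> i. real_cond_exp M F (\<lambda>y. Z y $ i) x)"

definition gen_sigma :: "'a measure \<Rightarrow> ('a \<Rightarrow> 'b) \<Rightarrow> 'b measure \<Rightarrow> 'a measure" where
  "gen_sigma M Y N = vimage_algebra (space M) Y N"

definition cond_mean_event :: "'a measure \<Rightarrow> ('a \<Rightarrow> real) \<Rightarrow> 'a set \<Rightarrow> real" where
  "cond_mean_event M X A = (LINT x:A|M. X x) / measure M A"

definition cond_var_event :: "'a measure \<Rightarrow> ('a \<Rightarrow> real) \<Rightarrow> 'a set \<Rightarrow> real" where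
  "cond_var_event M X A = cond_mean_event M (\<lambda>x. (X x - cond_mean_event M X A)\<^sup>2) A"

end

theory Submission
  imports Defs
begin

text \<open>
  Write \<open>X = \<beta>\<^sup>T Z\<close>, \<open>m = E(X | Y)\<close>, and let \<open>F\<close> be the \<sigma>-algebra generated by the slice label
  \<open>W\<close>, i.e.\ by the finite partition into the events \<open>{Y \<in> S\<^sub>h}\<close>. These events are
  \<open>\<sigma>(Y)\<close>-measurable, so by the tower property \<open>E(X | W) = E(m | W)\<close>, the step function
  equal on each slice to the slice mean of \<open>m\<close>. The law of total variance over the slices then
  reads \<open>var m = \<Sum>\<^sub>h P(S\<^sub>h) var(m | S\<^sub>h) + var E(X | W)\<close>, and the within-slice term is
  at most \<open>(1+\<gamma>)/H \<Sum>\<^sub>h var(m | S\<^sub>h) \<le> (1+\<gamma>)/\<tau> var m\<close> by the two hypotheses on the slices.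
\<close>

lemma cond_mean_event_cong:
  assumes "A \<in> sets M" "\<And>x. x \<in> A \<Longrightarrow> f x = g x"
  shows "cond_mean_event M f A = cond_mean_event M g A"
  unfolding cond_mean_event_def using assms by (simp add: set_lebesgue_integral_cong)

lemma cond_mean_event_cong_AE:
  assumes [measurable]: "A \<in> sets M" "f \<in> borel_measurable M" "g \<in> borel_measurable M"
    and "AE x in M. f x = g x"
  shows "cond_mean_event M f A = cond_mean_event M g A"
  unfolding cond_mean_event_def using assms(4)
  by (subst set_lebesgue_integral_cong_AE[where g = g]) auto

lemma cond_var_event_cong_AE:
  assumes [measurable]: "A \<in> sets M" "f \<in> borel_measurable M" "g \<in> borel_measurable M"
    and "AE x in M. f x = g x"
  shows "cond_var_event M f A = cond_var_event M g A"
  unfolding cond_var_event_def cond_mean_event_cong_AE[OF assms]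
  by (rule cond_mean_event_cong_AE) (use assms(4) in auto)

lemma cond_var_event_nonneg: "0 \<le> cond_var_event M f A"
  unfolding cond_var_event_def cond_mean_event_def set_lebesgue_integral_def
  by (intro divide_nonneg_nonneg integral_nonneg_AE) auto

lemma set_integral_eq_measure_mult_cond_mean_event:
  "measure M A \<noteq> 0 \<Longrightarrow> (LINT x:A|M. f x) = measure M A * cond_mean_event M f A"
  by (simp add: cond_mean_event_def)

lemma (in finite_measure) cond_mean_event_const:
  "A \<in> sets M \<Longrightarrow> measure M A \<noteq> 0 \<Longrightarrow> cond_mean_event M (\<lambda>_. c) A = c"
  by (simp add: cond_mean_event_def set_integral_const)

lemma (in finite_measure) set_integral_power2_diff:
  fixes f :: "'a \<Rightarrow> real"
  assumes A: "A \<in> sets M" "measure M A \<noteq> 0"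
    and f: "integrable M f" "integrable M (\<lambda>x. (f x)\<^sup>2)"
  shows "(LINT x:A|M. (f x - c)\<^sup>2)
    = measure M A * cond_var_event M f A + measure M A * (cond_mean_event M f A - c)\<^sup>2"
proof -
  define \<mu> where "\<mu> = cond_mean_event M f A"
  have int: "set_integrable M A g" if "integrable M g" for g :: "'a \<Rightarrow> real"
    unfolding set_integrable_def using integrable_mult_indicator[OF A(1) that] .
  have sq_int: "set_integrable M A (\<lambda>x. (f x - d)\<^sup>2)" for d
    by (rule int) (simp add: power2_diff f)
  have "(f x - c)\<^sup>2 = (f x - \<mu>)\<^sup>2 + (2 * (\<mu> - c) * f x + ((\<mu> - c)\<^sup>2 - 2 * (\<mu> - c) * \<mu>))" for x
    by (simp add: power2_eq_square algebra_simps)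
  then have "(LINT x:A|M. (f x - c)\<^sup>2) = (LINT x:A|M. (f x - \<mu>)\<^sup>2)
      + (2 * (\<mu> - c) * (LINT x:A|M. f x) + measure M A * ((\<mu> - c)\<^sup>2 - 2 * (\<mu> - c) * \<mu>))"
    using sq_int int[OF f(1)] int[OF integrable_const] A by (simp add: set_integral_const right_diff_distrib)
  also have "\<dots> = measure M A * cond_var_event M f A + measure M A * (\<mu> - c)\<^sup>2"
    using A(2) by (simp add: cond_var_event_def cond_mean_event_def \<mu>_def power2_eq_square algebra_simps)
  finally show ?thesis unfolding \<mu>_def .
qed

lemma (in prob_space) variance_cong_AE:
  fixes f g :: "'a \<Rightarrow> real"
  assumes [measurable]: "f \<in> borel_measurable M" "g \<in> borel_measurable M"
    and "AE x in M. f x = g x"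
  shows "variance f = variance g"
proof -
  have "expectation f = expectation g" using assms(3) by (rule integral_cong_AE[OF assms(1,2)])
  with assms(3) have "AE x in M. (f x - expectation f)\<^sup>2 = (g x - expectation g)\<^sup>2"
    by auto
  then show ?thesis by (rule integral_cong_AE[rotated 2]) measurable
qed

lemma inner_cond_exp_vec:
  "b \<bullet> cond_exp_vec M F Z x = (\<Sum>i\<in>UNIV. b $ i * real_cond_exp M F (\<lambda>y. Z y $ i) x)"
  by (simp add: cond_exp_vec_def inner_vec_def)

lemma borel_measurable_inner_cond_exp_vec [measurable]:
  "(\<lambda>x. b \<bullet> cond_exp_vec M F Z x) \<in> borel_measurable M"
  unfolding inner_cond_exp_vec by measurable

lemma (in sigma_finite_subalgebra) AE_inner_cond_exp_vec:
  assumes "\<And>i. integrable M (\<lambda>x. Z x $ i)"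
  shows "AE x in M. b \<bullet> cond_exp_vec M F Z x = real_cond_exp M F (\<lambda>x. b \<bullet> Z x) x"
proof -
  have "AE x in M. real_cond_exp M F (\<lambda>x. \<Sum>i\<in>UNIV. b $ i * Z x $ i) x
      = (\<Sum>i\<in>UNIV. real_cond_exp M F (\<lambda>x. b $ i * Z x $ i) x)"
    using assms by (intro real_cond_exp_sum) auto
  moreover have "AE x in M. \<forall>i\<in>UNIV. real_cond_exp M F (\<lambda>x. b $ i * Z x $ i) x
      = b $ i * real_cond_exp M F (\<lambda>x. Z x $ i) x"
    using assms by (intro AE_finite_allI) auto
  ultimately show ?thesis
    by eventually_elim (simp add: cond_exp_vec_def inner_vec_def)
qed

lemma (in finite_measure) square_integrable_inner:
  fixes Z :: "'a \<Rightarrow> 'b::euclidean_space"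
  assumes [measurable]: "Z \<in> borel_measurable M" and sq: "integrable M (\<lambda>x. (norm (Z x))\<^sup>2)"
  shows "integrable M (\<lambda>x. (b \<bullet> Z x)\<^sup>2)" and "integrable M (\<lambda>x. b \<bullet> Z x)"
proof -
  have Cauchy_Schwarz: "(b \<bullet> z)\<^sup>2 \<le> (norm b)\<^sup>2 * (norm z)\<^sup>2" for z :: 'b
  proof -
    have "\<bar>b \<bullet> z\<bar>\<^sup>2 \<le> (norm b * norm z)\<^sup>2"
      by (rule power_mono[OF Cauchy_Schwarz_ineq2 abs_ge_zero])
    then show ?thesis by (simp add: power_mult_distrib)
  qed
  have bound_int: "integrable M (\<lambda>x. (norm b)\<^sup>2 * (norm (Z x))\<^sup>2)"
    by (rule integrable_mult_right) (rule sq)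
  have bound: "AE x in M. norm ((b \<bullet> Z x)\<^sup>2) \<le> norm ((norm b)\<^sup>2 * (norm (Z x))\<^sup>2)"
    by (intro AE_I2) (simp add: Cauchy_Schwarz)
  show sq_inner: "integrable M (\<lambda>x. (b \<bullet> Z x)\<^sup>2)"
    by (rule Bochner_Integration.integrable_bound[OF bound_int _ bound]) measurable
  show "integrable M (\<lambda>x. b \<bullet> Z x)"
    using _ sq_inner by (rule square_integrable_imp_integrable) measurable
qed

lemma subalgebra_gen_sigma: "Y \<in> measurable M N \<Longrightarrow> subalgebra M (gen_sigma M Y N)"
  using sets_image_in_sets[of M "space M" Y N] by (simp add: subalgebra_def gen_sigma_def)

lemma vimage_in_gen_sigma: "B \<in> sets N \<Longrightarrow> {x \<in> space M. Y x \<in> B} \<in> sets (gen_sigma M Y N)"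
  using in_vimage_algebra[of B N Y "space M"] by (simp add: gen_sigma_def vimage_def Int_def conj_commute)

locale prob_partition = prob_space M for M :: "'a measure" +
  fixes I :: "'i set" and A :: "'i \<Rightarrow> 'a set"
  assumes finite_index: "finite I"
    and sets_cell: "i \<in> I \<Longrightarrow> A i \<in> events"
    and disjoint_cells: "disjoint_family_on A I"
    and cells_cover: "(\<Union>i\<in>I. A i) = space M"
    and prob_cell_pos: "i \<in> I \<Longrightarrow> 0 < prob (A i)"
begin

definition partition_cond_exp :: "('a \<Rightarrow> real) \<Rightarrow> 'a \<Rightarrow> real" where
  "partition_cond_exp X x = (\<Sum>i\<in>I. indicator (A i) x * cond_mean_event M X (A i))"

definition generated_by_partition :: "'a measure \<Rightarrow> bool" where
  "generated_by_partition F \<longleftrightarrow> space F = space M \<and> (\<forall>i\<in>I. A i \<in> sets F)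
     \<and> (\<forall>B\<in>sets F. \<exists>J\<subseteq>I. B = (\<Union>j\<in>J. A j))"

lemma prob_cell_nonzero [simp]: "i \<in> I \<Longrightarrow> prob (A i) \<noteq> 0"
  using prob_cell_pos by fastforce

lemma cellE:
  assumes "x \<in> space M"
  obtains k where "k \<in> I" "x \<in> A k"
proof -
  have "x \<in> (\<Union>i\<in>I. A i)" using assms by (simp only: cells_cover)
  then show ?thesis using that by (rule UN_E)
qed

lemma sum_indicator_cells:
  fixes c :: "'i \<Rightarrow> real"
  assumes "k \<in> I" "x \<in> A k"
  shows "(\<Sum>i\<in>I. indicator (A i) x * c i) = c k"
proof -
  have "x \<notin> A i" if "i \<in> I" "i \<noteq> k" for i
    using disjoint_cells assms that by (auto simp: disjoint_family_on_def)
  then have "(\<Sum>i\<in>I. indicator (A i) x * c i) = (\<Sum>i\<in>I. if i = k then c k else 0)"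
    using assms by (intro sum.cong) auto
  then show ?thesis using assms finite_index by simp
qed

lemma set_integral_unions_cells:
  fixes f :: "'a \<Rightarrow> real"
  assumes "J \<subseteq> I" "integrable M f"
  shows "(LINT x:(\<Union>j\<in>J. A j)|M. f x) = (\<Sum>j\<in>J. LINT x:A j|M. f x)"
proof (rule set_integral_finite_Union)
  show "finite J" using assms(1) finite_index by (rule finite_subset)
  show "disjoint_family_on A J" using assms(1) disjoint_cells by (rule disjoint_family_on_mono)
  show "set_integrable M (A j) f" if "j \<in> J" for j
    unfolding set_integrable_def using that assms sets_cell by (intro integrable_mult_indicator) auto
qed (use assms sets_cell in auto)

lemma expectation_eq_sum_cells:
  "integrable M f \<Longrightarrow> expectation f = (\<Sum>i\<in>I. prob (A i) * cond_mean_event M f (A i))"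
  using set_integral_unions_cells[of I f]
  by (auto simp: cells_cover set_integral_space cond_mean_event_def intro!: sum.cong)

theorem law_of_total_variance:
  fixes f :: "'a \<Rightarrow> real"
  assumes "integrable M f" "integrable M (\<lambda>x. (f x)\<^sup>2)"
  shows "variance f = (\<Sum>i\<in>I. prob (A i) * cond_var_event M f (A i))
    + (\<Sum>i\<in>I. prob (A i) * (cond_mean_event M f (A i) - expectation f)\<^sup>2)"
proof -
  have "variance f = (\<Sum>i\<in>I. LINT x:A i|M. (f x - expectation f)\<^sup>2)"
    using set_integral_unions_cells[of I "\<lambda>x. (f x - expectation f)\<^sup>2"] assms
    by (simp add: cells_cover set_integral_space power2_diff)
  also have "\<dots> = (\<Sum>i\<in>I. prob (A i) * cond_var_event M f (A i)
      + prob (A i) * (cond_mean_event M f (A i) - expectation f)\<^sup>2)"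
    using assms sets_cell by (intro sum.cong refl set_integral_power2_diff) auto
  finally show ?thesis by (simp add: sum.distrib)
qed

lemma partition_cond_exp_cell:
  "i \<in> I \<Longrightarrow> x \<in> A i \<Longrightarrow> partition_cond_exp X x = cond_mean_event M X (A i)"
  unfolding partition_cond_exp_def by (rule sum_indicator_cells)

lemma integrable_sum_indicator_cells:
  fixes c :: "'i \<Rightarrow> real"
  shows "integrable M (\<lambda>x. \<Sum>i\<in>I. indicator (A i) x * c i)"
proof (rule Bochner_Integration.integrable_sum)
  fix i assume "i \<in> I"
  then have "integrable M (indicator (A i) :: 'a \<Rightarrow> real)"
    using sets_cell by (intro integrable_real_indicator) (auto simp: less_top[symmetric])
  then show "integrable M (\<lambda>x. indicator (A i) x * c i)" by (rule integrable_mult_left)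
qed

lemma borel_measurable_partition_cond_exp [measurable]:
  "partition_cond_exp X \<in> borel_measurable M"
  using integrable_sum_indicator_cells unfolding partition_cond_exp_def by (rule borel_measurable_integrable)

lemma partition_cond_exp_square_integrable:
  "integrable M (\<lambda>x. (partition_cond_exp X x)\<^sup>2)"
proof -
  have sq: "(partition_cond_exp X x)\<^sup>2 = (\<Sum>i\<in>I. indicator (A i) x * (cond_mean_event M X (A i))\<^sup>2)"
    if x: "x \<in> space M" for x
  proof -
    obtain k where k: "k \<in> I" "x \<in> A k" using x by (rule cellE)
    show ?thesis using partition_cond_exp_cell[OF k] sum_indicator_cells[OF k] by simp
  qed
  have "integrable M (\<lambda>x. (partition_cond_exp X x)\<^sup>2)
      \<longleftrightarrow> integrable M (\<lambda>x. \<Sum>i\<in>I. indicator (A i) x * (cond_mean_event M X (A i))\<^sup>2)"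
    by (rule Bochner_Integration.integrable_cong[OF refl sq])
  then show ?thesis using integrable_sum_indicator_cells by (rule iffD2)
qed

lemma cond_mean_event_partition_cond_exp:
  "i \<in> I \<Longrightarrow> cond_mean_event M (partition_cond_exp X) (A i) = cond_mean_event M X (A i)"
proof -
  assume i: "i \<in> I"
  have "cond_mean_event M (partition_cond_exp X) (A i) = cond_mean_event M (\<lambda>_. cond_mean_event M X (A i)) (A i)"
    using i sets_cell by (intro cond_mean_event_cong) (auto simp: partition_cond_exp_def sum_indicator_cells)
  also have "\<dots> = cond_mean_event M X (A i)"
    using i sets_cell prob_cell_pos[OF i] by (intro cond_mean_event_const) auto
  finally show ?thesis .
qed

lemma variance_partition_cond_exp:
  assumes "integrable M X"
  shows "variance (partition_cond_exp X)
    = (\<Sum>i\<in>I. prob (A i) * (cond_mean_event M X (A i) - expectation X)\<^sup>2)"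
proof -
  let ?g = "partition_cond_exp X"
  have g_int: "integrable M ?g"
    unfolding partition_cond_exp_def by (rule integrable_sum_indicator_cells)
  have cond_var_g: "cond_var_event M ?g (A i) = 0" if "i \<in> I" for i
  proof -
    have "cond_var_event M ?g (A i) = cond_mean_event M (\<lambda>_. 0) (A i)"
      unfolding cond_var_event_def cond_mean_event_partition_cond_exp[OF that]
      using that sets_cell partition_cond_exp_cell[OF that] by (intro cond_mean_event_cong) auto
    then show ?thesis using that sets_cell by (simp add: cond_mean_event_const)
  qed
  have E_g: "expectation ?g = expectation X"
    unfolding expectation_eq_sum_cells[OF g_int] expectation_eq_sum_cells[OF assms]
    by (rule sum.cong[OF refl]) (simp add: cond_mean_event_partition_cond_exp)
  have within: "(\<Sum>i\<in>I. prob (A i) * cond_var_event M ?g (A i)) = 0"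
    by (rule sum.neutral) (simp add: cond_var_g)
  have between: "(\<Sum>i\<in>I. prob (A i) * (cond_mean_event M ?g (A i) - expectation ?g)\<^sup>2)
      = (\<Sum>i\<in>I. prob (A i) * (cond_mean_event M X (A i) - expectation X)\<^sup>2)"
    by (rule sum.cong[OF refl]) (simp add: cond_mean_event_partition_cond_exp E_g)
  show ?thesis
    using law_of_total_variance[OF g_int partition_cond_exp_square_integrable]
    unfolding within between by simp
qed

lemma subalgebra_if_generated_by_partition:
  assumes "generated_by_partition F"
  shows "subalgebra M F"
  unfolding subalgebra_def
proof
  show "space F = space M" using assms by (simp add: generated_by_partition_def)
  show "sets F \<subseteq> sets M"
  proof
    fix B assume "B \<in> sets F"
    then obtain J where J: "J \<subseteq> I" "B = (\<Union>j\<in>J. A j)"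
      using assms unfolding generated_by_partition_def by auto
    have "finite J" using J(1) finite_index by (rule finite_subset)
    then show "B \<in> sets M" unfolding J(2) using J(1) sets_cell by auto
  qed
qed

lemma real_cond_exp_eq_partition_cond_exp:
  assumes F: "generated_by_partition F" and X: "integrable M X"
  shows "AE x in M. real_cond_exp M F X x = partition_cond_exp X x"
proof -
  interpret F: finite_measure_subalgebra M F
    using subalgebra_if_generated_by_partition[OF F] by unfold_locales
  have g_int: "integrable M (partition_cond_exp X)"
    unfolding partition_cond_exp_def by (rule integrable_sum_indicator_cells)
  have cells_F: "A i \<in> sets F" if "i \<in> I" for i
    using F that unfolding generated_by_partition_def by auto
  show ?thesis
  proof (rule F.real_cond_exp_charact)
    fix B assume "B \<in> sets F"
    then obtain J where J: "J \<subseteq> I" "B = (\<Union>j\<in>J. A j)"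
      using F unfolding generated_by_partition_def by auto
    have cell: "(LINT x:A j|M. X x) = (LINT x:A j|M. partition_cond_exp X x)" if "j \<in> J" for j
    proof -
      have j: "j \<in> I" using that J(1) by auto
      show ?thesis
        unfolding set_integral_eq_measure_mult_cond_mean_event[OF prob_cell_nonzero[OF j]]
        by (simp only: cond_mean_event_partition_cond_exp[OF j])
    qed
    have "(LINT x:B|M. X x) = (\<Sum>j\<in>J. LINT x:A j|M. X x)"
      unfolding J(2) using J(1) X by (rule set_integral_unions_cells)
    also have "\<dots> = (\<Sum>j\<in>J. LINT x:A j|M. partition_cond_exp X x)"
      using cell by (rule sum.cong[OF refl])
    also have "\<dots> = (LINT x:B|M. partition_cond_exp X x)"
      unfolding J(2) using J(1) g_int by (rule set_integral_unions_cells[symmetric])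
    finally show "(LINT x:B|M. X x) = (LINT x:B|M. partition_cond_exp X x)" .
  next
    show "partition_cond_exp X \<in> borel_measurable F"
      unfolding partition_cond_exp_def using cells_F by (intro borel_measurable_sum) auto
  qed (use X g_int in auto)
qed

theorem variance_real_cond_exp_coarsening:
  assumes G: "subalgebra M G" "\<And>i. i \<in> I \<Longrightarrow> A i \<in> sets G"
    and F: "generated_by_partition F"
    and X: "integrable M X" "integrable M (\<lambda>x. (X x)\<^sup>2)"
  shows "variance (real_cond_exp M F X) = variance (real_cond_exp M G X)
    - (\<Sum>i\<in>I. prob (A i) * cond_var_event M (real_cond_exp M G X) (A i))"
proof -
  \<comment> \<open>On the cells \<open>E(X | G)\<close> has the same means as \<open>X\<close>, hence the same coarsening
    \<open>E(X | F)\<close>; the law of total variance for \<open>E(X | G)\<close> then isolates the within-cell part.\<close>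
  interpret G: finite_measure_subalgebra M G using G(1) by unfold_locales
  let ?R = "real_cond_exp M G X"
  have R_int: "integrable M ?R" using X(1) by (rule G.real_cond_exp_int)
  have R2_int: "integrable M (\<lambda>x. (?R x)\<^sup>2)"
    using X convex_power2 by (intro G.integrable_convex_cond_exp[where I = UNIV]) auto
  have cond_mean_R: "cond_mean_event M ?R (A i) = cond_mean_event M X (A i)" if "i \<in> I" for i
    using G.real_cond_exp_intA[OF X(1) G(2)[OF that]] by (simp add: cond_mean_event_def)
  have E_R: "expectation ?R = expectation X" using X(1) by (rule G.real_cond_exp_int)
  have "variance (real_cond_exp M F X) = variance (partition_cond_exp X)"
    using real_cond_exp_eq_partition_cond_exp[OF F X(1)]
    by (rule variance_cong_AE[rotated 2]) measurable
  also have "\<dots> = (\<Sum>i\<in>I. prob (A i) * (cond_mean_event M X (A i) - expectation X)\<^sup>2)"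
    using X(1) by (rule variance_partition_cond_exp)
  also have "\<dots> = (\<Sum>i\<in>I. prob (A i) * (cond_mean_event M ?R (A i) - expectation ?R)\<^sup>2)"
    by (rule sum.cong[OF refl]) (simp only: cond_mean_R E_R)
  also have "\<dots> = variance ?R - (\<Sum>i\<in>I. prob (A i) * cond_var_event M ?R (A i))"
    using law_of_total_variance[OF R_int R2_int] by simp
  finally show ?thesis .
qed

lemma generated_by_partition_gen_sigma:
  fixes c :: "'i \<Rightarrow> 'b::t1_space"
  assumes inj: "inj_on c I" and W: "\<And>i x. i \<in> I \<Longrightarrow> x \<in> A i \<Longrightarrow> W x = c i"
  shows "generated_by_partition (gen_sigma M W borel)"
proof -
  have cell_vimage: "A i = W -` {c i} \<inter> space M" if i: "i \<in> I" for i
  proof (intro equalityI subsetI)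
    fix x assume "x \<in> A i"
    then show "x \<in> W -` {c i} \<inter> space M"
      using W[OF i] sets.sets_into_space[OF sets_cell[OF i]] by auto
  next
    fix x assume x: "x \<in> W -` {c i} \<inter> space M"
    then obtain k where k: "k \<in> I" "x \<in> A k" by (auto elim: cellE)
    then have "c k = c i" using W[OF k] x by simp
    then show "x \<in> A i" using inj_onD[OF inj _ k(1) i] k(2) by simp
  qed
  have unions: "\<exists>J\<subseteq>I. B = (\<Union>j\<in>J. A j)" if B_sets: "B \<in> sets (gen_sigma M W borel)" for B
  proof -
    obtain C where B: "B = W -` C \<inter> space M"
      using B_sets unfolding gen_sigma_def by (subst (asm) sets_vimage_algebra2) auto
    have "B = (\<Union>j\<in>{i\<in>I. c i \<in> C}. A j)"
    proof (intro equalityI subsetI)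
      fix x assume "x \<in> B"
      then have x: "x \<in> space M" "W x \<in> C" by (auto simp: B)
      obtain k where k: "k \<in> I" "x \<in> A k" using x(1) by (rule cellE)
      then show "x \<in> (\<Union>j\<in>{i\<in>I. c i \<in> C}. A j)" using x(2) W[OF k] by auto
    next
      fix x assume "x \<in> (\<Union>j\<in>{i\<in>I. c i \<in> C}. A j)"
      then show "x \<in> B" unfolding B using cell_vimage by auto
    qed
    then show ?thesis by (intro exI[of _ "{i\<in>I. c i \<in> C}"]) auto
  qed
  have "A i \<in> sets (gen_sigma M W borel)" if "i \<in> I" for i
    unfolding gen_sigma_def cell_vimage[OF that] by (intro in_vimage_algebra borel_closed closed_singleton)
  then show ?thesis
    unfolding generated_by_partition_def using unions by (simp add: gen_sigma_def)
qed

lemma generated_by_partition_gen_sigma_sum_indicator: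
  fixes c :: "'i \<Rightarrow> real"
  assumes "inj_on c I" and cells: "\<And>i. i \<in> I \<Longrightarrow> A i = B i \<inter> space M"
  shows "generated_by_partition (gen_sigma M (\<lambda>x. \<Sum>i\<in>I. c i * indicator (B i) x) borel)"
proof (rule generated_by_partition_gen_sigma[OF assms(1)])
  fix k x assume k: "k \<in> I" "x \<in> A k"
  have "(\<Sum>i\<in>I. c i * indicator (B i) x) = (\<Sum>i\<in>I. indicator (A i) x * c i)"
    using k by (intro sum.cong) (auto simp: cells indicator_def)
  also have "\<dots> = c k" using k by (rule sum_indicator_cells)
  finally show "(\<Sum>i\<in>I. c i * indicator (B i) x) = c k" .
qed

theorem variance_inner_cond_exp_vec_coarsening:
  fixes Z :: "'a \<Rightarrow> real ^ 'd"
  assumes G: "subalgebra M G" "\<And>i. i \<in> I \<Longrightarrow> A i \<in> sets G"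
    and F: "generated_by_partition F"
    and Z: "Z \<in> borel_measurable M" "integrable M (\<lambda>x. (norm (Z x))\<^sup>2)"
  shows "variance (\<lambda>x. b \<bullet> cond_exp_vec M F Z x) = variance (\<lambda>x. b \<bullet> cond_exp_vec M G Z x)
    - (\<Sum>i\<in>I. prob (A i) * cond_var_event M (\<lambda>x. b \<bullet> cond_exp_vec M G Z x) (A i))"
proof -
  interpret G: finite_measure_subalgebra M G using G(1) by unfold_locales
  interpret F: finite_measure_subalgebra M F
    using subalgebra_if_generated_by_partition[OF F] by unfold_locales
  have "integrable M (\<lambda>x. axis i 1 \<bullet> Z x)" for i
    using Z by (rule square_integrable_inner)
  then have Z_nth: "integrable M (\<lambda>x. Z x $ i)" for i
    by (simp add: inner_axis')
  have X: "integrable M (\<lambda>x. b \<bullet> Z x)" "integrable M (\<lambda>x. (b \<bullet> Z x)\<^sup>2)"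
    using Z by (rule square_integrable_inner)+
  let ?R = "real_cond_exp M G (\<lambda>x. b \<bullet> Z x)"
  have AE_G: "AE x in M. b \<bullet> cond_exp_vec M G Z x = ?R x"
    using Z_nth by (rule G.AE_inner_cond_exp_vec)
  have AE_F: "AE x in M. b \<bullet> cond_exp_vec M F Z x = real_cond_exp M F (\<lambda>x. b \<bullet> Z x) x"
    using Z_nth by (rule F.AE_inner_cond_exp_vec)
  have cond_var: "cond_var_event M (\<lambda>x. b \<bullet> cond_exp_vec M G Z x) (A i) = cond_var_event M ?R (A i)"
    if "i \<in> I" for i
    using sets_cell[OF that] _ _ AE_G by (rule cond_var_event_cong_AE) measurable
  have "variance (\<lambda>x. b \<bullet> cond_exp_vec M F Z x) = variance (real_cond_exp M F (\<lambda>x. b \<bullet> Z x))"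
    using AE_F by (rule variance_cong_AE[rotated 2]) measurable
  also have "\<dots> = variance ?R - (\<Sum>i\<in>I. prob (A i) * cond_var_event M ?R (A i))"
    using G F X by (rule variance_real_cond_exp_coarsening)
  also have "variance ?R = variance (\<lambda>x. b \<bullet> cond_exp_vec M G Z x)"
    using AE_G by (rule variance_cong_AE[rotated 2, symmetric]) measurable
  also have "(\<Sum>i\<in>I. prob (A i) * cond_var_event M ?R (A i))
      = (\<Sum>i\<in>I. prob (A i) * cond_var_event M (\<lambda>x. b \<bullet> cond_exp_vec M G Z x) (A i))"
    by (rule sum.cong[OF refl]) (simp only: cond_var)
  finally show ?thesis .
qed

end

lemma prob_partition_vimage:
  assumes "prob_space M" and Y: "Y \<in> measurable M N" and "finite I"
    and S: "\<And>i. i \<in> I \<Longrightarrow> S i \<in> sets N" "disjoint_family_on S I"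
    and cover: "\<And>x. x \<in> space M \<Longrightarrow> \<exists>i\<in>I. Y x \<in> S i"
    and pos: "\<And>i. i \<in> I \<Longrightarrow> 0 < measure M {x \<in> space M. Y x \<in> S i}"
  shows "prob_partition M I (\<lambda>i. {x \<in> space M. Y x \<in> S i})"
proof (intro prob_partition.intro prob_partition_axioms.intro)
  show "{x \<in> space M. Y x \<in> S i} \<in> sets M" if "i \<in> I" for i
    using measurable_sets[OF Y S(1)[OF that]] by (simp add: vimage_def Int_def conj_commute)
  show "disjoint_family_on (\<lambda>i. {x \<in> space M. Y x \<in> S i}) I"
    using S(2) unfolding disjoint_family_on_def by auto
  show "(\<Union>i\<in>I. {x \<in> space M. Y x \<in> S i}) = space M"
    using cover by auto
qed (use assms in auto)

theorem mainTheorem12: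
  fixes M :: "'a measure" and N :: "'b measure"
    and Z :: "'a \<Rightarrow> real ^ 'd" and Y :: "'a \<Rightarrow> 'b"
    and S :: "nat \<Rightarrow> 'b set" and H :: nat and \<gamma> \<tau> :: real
  assumes "prob_space M"
    and Z_meas: "Z \<in> borel_measurable M"
    and Z_sq: "integrable M (\<lambda>x. (norm (Z x))\<^sup>2)"
    and Y_meas: "Y \<in> measurable M N"
    and S_sets: "\<And>h. h \<in> {1..H} \<Longrightarrow> S h \<in> sets N"
    and S_disj: "\<And>h k. h \<in> {1..H} \<Longrightarrow> k \<in> {1..H} \<Longrightarrow> h \<noteq> k \<Longrightarrow> S h \<inter> S k = {}"
    and S_cover: "\<And>x. x \<in> space M \<Longrightarrow> \<exists>h\<in>{1..H}. Y x \<in> S h"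
    and gamma_pos: "\<gamma> > 0" and tau_gt: "\<tau> > 1 + \<gamma>"
    and S_prob: "\<And>h. h \<in> {1..H} \<Longrightarrow>
        0 < measure M {x \<in> space M. Y x \<in> S h} \<and>
        measure M {x \<in> space M. Y x \<in> S h} \<le> (1 + \<gamma>) / real H"
    and slice: "\<And>b :: real ^ 'd. norm b = 1 \<Longrightarrow>
        (1 / real H) * (\<Sum>h=1..H. cond_var_event M
            (\<lambda>x. b \<bullet> cond_exp_vec M (gen_sigma M Y N) Z x) {x \<in> space M. Y x \<in> S h})
        \<le> (1 / \<tau>) * prob_space.variance M (\<lambda>x. b \<bullet> cond_exp_vec M (gen_sigma M Y N) Z x)"
  shows "\<forall>b :: real ^ 'd. norm b = 1 \<longrightarrow>
     (1 - (1 + \<gamma>) / \<tau>) * prob_space.variance M (\<lambda>x. b \<bullet> cond_exp_vec M (gen_sigma M Y N) Z x)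
     \<le> prob_space.variance M (\<lambda>x. b \<bullet> cond_exp_vec M
          (gen_sigma M (\<lambda>x. \<Sum>h=1..H. real h * indicator {y. Y y \<in> S h} x) borel) Z x)"
proof (intro allI impI)
  fix b :: "real ^ 'd" assume b: "norm b = 1"
  interpret prob_space M by fact
  define A where "A h = {x \<in> space M. Y x \<in> S h}" for h
  let ?m = "\<lambda>x. b \<bullet> cond_exp_vec M (gen_sigma M Y N) Z x"
  let ?F = "gen_sigma M (\<lambda>x. \<Sum>h=1..H. real h * indicator {y. Y y \<in> S h} x) borel"
  have disj: "disjoint_family_on S {1..H}" using S_disj by (auto simp: disjoint_family_on_def)
  interpret P: prob_partition M "{1..H}" A
    unfolding A_def using assms(1) Y_meas finite_atLeastAtMost S_sets disj S_cover S_prob[THEN conjunct1]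
    by (rule prob_partition_vimage)
  have cells_G: "A h \<in> sets (gen_sigma M Y N)" if "h \<in> {1..H}" for h
    unfolding A_def using S_sets[OF that] by (rule vimage_in_gen_sigma)
  have F: "P.generated_by_partition ?F"
    by (rule P.generated_by_partition_gen_sigma_sum_indicator) (auto simp: inj_on_def A_def)
  have "(\<Sum>h=1..H. prob (A h) * cond_var_event M ?m (A h))
      \<le> (\<Sum>h=1..H. (1 + \<gamma>) / real H * cond_var_event M ?m (A h))"
    using S_prob by (intro sum_mono mult_right_mono cond_var_event_nonneg) (simp add: A_def)
  also have "\<dots> = (1 + \<gamma>) * (1 / real H * (\<Sum>h=1..H. cond_var_event M ?m (A h)))"
    by (simp add: sum_distrib_left)
  also have "\<dots> \<le> (1 + \<gamma>) * (1 / \<tau> * variance ?m)"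
    using slice[OF b] gamma_pos by (intro mult_left_mono) (simp_all add: A_def)
  finally have "(\<Sum>h=1..H. prob (A h) * cond_var_event M ?m (A h)) \<le> (1 + \<gamma>) / \<tau> * variance ?m"
    by simp
  moreover note P.variance_inner_cond_exp_vec_coarsening
    [OF subalgebra_gen_sigma[OF Y_meas] cells_G F Z_meas Z_sq, of b]
  ultimately show "(1 - (1 + \<gamma>) / \<tau>) * variance ?m \<le> variance (\<lambda>x. b \<bullet> cond_exp_vec M ?F Z x)"
    unfolding left_diff_distrib by linarith
qed

end
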